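(* For every finite bounded commutative BCK-algebra $\mathcal A$, either every $x\in\mathcal A$ satisfies $x\vee\neg x=1$, or $\operatorname{emd}(\mathcal A)\le \frac23$. That is, the equation $x\vee\neg x=1$ has finite satisfiability gap $\frac13$ among bounded commutative BCK-algebras. Moreover the value $\frac23$ is attained: $\operatorname{emd}(\mathcal C_3)=\frac23$ (and in general $\operatorname{emd}(\mathcal C_n)=\frac2n$ for $n\ge2$).
   Context: A BCK-algebra is a set $A$ with a binary operation $\cdot$ and a constant $0$ such that for all $x,y,z\in A$: (BCK1) $((x\cdot y)\cdot(x\cdot z))\cdot(z\cdot y)=0$; (BCK2) $(x\cdot(x\cdot y))\cdot y=0$; (BCK3) $x\cdot x=0$; (BCK4) $0\cdot x=0$; (BCK5) $x\cdot y=0$ and $y\cdot x=0$ imply $x=y$. Define $x\wedge y:=y\cdot(y\cdot x)$; the algebra is commutative if $x\wedge y=y\wedge x$ for all $x,y$. A bounded BCK-algebra is a BCK-algebra with a distinguished element $1$ such that $x\cdot 1=0$ for all $x$; then $\neg x:=1\cdot x$ and $x\vee y:=\neg(\neg x\wedge\neg y)$. For a finite bounded commutative BCK-algebra $\mathcal A$, $\operatorname{emd}(\mathcal A)=|\{x\in\mathcal A: x\vee\neg x=1\}|/|\mathcal A|$. For $n\ge 2$, $\mathcal C_n$ is the BCK-algebra with carrier $\{0,1,\dots,n-1\}$ and $x\cdot y=\max\{x-y,0\}$, regarded as bounded with $1=n-1$. *)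

theory Defs
  imports Main "HOL.Real"
begin

definition bck_algebra :: "'a set \<Rightarrow> ('a \<Rightarrow> 'a \<Rightarrow> 'a) \<Rightarrow> 'a \<Rightarrow> bool" where
  "bck_algebra A m z \<longleftrightarrow>
     z \<in> A \<and> (\<forall>x\<in>A. \<forall>y\<in>A. m x y \<in> A) \<and>
     (\<forall>x\<in>A. \<forall>y\<in>A. \<forall>w\<in>A. m (m (m x y) (m x w)) (m w y) = z) \<and>
     (\<forall>x\<in>A. \<forall>y\<in>A. m (m x (m x y)) y = z) \<and>
     (\<forall>x\<in>A. m x x = z) \<and>
     (\<forall>x\<in>A. m z x = z) \<and>
     (\<forall>x\<in>A. \<forall>y\<in>A. m x y = z \<and> m y x = z \<longrightarrow> x = y)"

definition bck_meet :: "('a \<Rightarrow> 'a \<Rightarrow> 'a) \<Rightarrow> 'a \<Rightarrow> 'a \<Rightarrow> 'a" where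
  "bck_meet m x y = m y (m y x)"

definition commutative_bck :: "'a set \<Rightarrow> ('a \<Rightarrow> 'a \<Rightarrow> 'a) \<Rightarrow> 'a \<Rightarrow> bool" where
  "commutative_bck A m z \<longleftrightarrow> bck_algebra A m z \<and>
     (\<forall>x\<in>A. \<forall>y\<in>A. bck_meet m x y = bck_meet m y x)"

definition bounded_bck :: "'a set \<Rightarrow> ('a \<Rightarrow> 'a \<Rightarrow> 'a) \<Rightarrow> 'a \<Rightarrow> 'a \<Rightarrow> bool" where
  "bounded_bck A m z u \<longleftrightarrow> bck_algebra A m z \<and> u \<in> A \<and> (\<forall>x\<in>A. m x u = z)"

definition bck_neg :: "('a \<Rightarrow> 'a \<Rightarrow> 'a) \<Rightarrow> 'a \<Rightarrow> 'a \<Rightarrow> 'a" where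
  "bck_neg m u x = m u x"

definition bck_join :: "('a \<Rightarrow> 'a \<Rightarrow> 'a) \<Rightarrow> 'a \<Rightarrow> 'a \<Rightarrow> 'a \<Rightarrow> 'a" where
  "bck_join m u x y = bck_neg m u (bck_meet m (bck_neg m u x) (bck_neg m u y))"

definition emd :: "'a set \<Rightarrow> ('a \<Rightarrow> 'a \<Rightarrow> 'a) \<Rightarrow> 'a \<Rightarrow> real" where
  "emd A m u = real (card {x\<in>A. bck_join m u x (bck_neg m u x) = u}) / real (card A)"

definition Cn_carrier :: "nat \<Rightarrow> nat set" where
  "Cn_carrier n = {0..<n}"

definition Cn_op :: "nat \<Rightarrow> nat \<Rightarrow> nat" where
  "Cn_op x y = max (x - y) 0"

end

theory Submission
  imports Defs
begin

text \<open>A bounded commutative BCK-algebra is an MV-algebra with product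
  \<open>x \<odot> y = x \<cdot> \<not>y\<close>, and \<open>x \<or> \<not>x = 1\<close> holds exactly for the Boolean (\<open>\<odot>\<close>-idempotent)
  elements. If some element is not Boolean, one finds \<open>d \<noteq> 0\<close> with \<open>d \<odot> d = 0\<close>.
  For Boolean \<open>b\<close>, the elements \<open>b \<cdot> d\<close> and \<open>\<not>b \<cdot> d\<close> cannot both be Boolean (else
  \<open>d\<close> would be), and \<open>b \<mapsto> b \<cdot> d\<close> is injective on Boolean elements. This gives an
  injection of the Boolean elements into (non-Boolean elements) \<open>\<times>\<close> 2, so at most
  two thirds of the algebra is Boolean. In the chain \<open>\<C>\<^sub>n\<close> only \<open>0\<close> and \<open>n - 1\<close> are Boolean.\<close>

locale bck =
  fixes A :: "'a set" and m :: "'a \<Rightarrow> 'a \<Rightarrow> 'a" and z :: 'a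
  assumes bck_algebra: "bck_algebra A m z"
begin

lemma diff_closed: "x \<in> A \<Longrightarrow> y \<in> A \<Longrightarrow> m x y \<in> A"
  using bck_algebra unfolding bck_algebra_def by blast

lemma bck1: "x \<in> A \<Longrightarrow> y \<in> A \<Longrightarrow> w \<in> A \<Longrightarrow> m (m (m x y) (m x w)) (m w y) = z"
  using bck_algebra unfolding bck_algebra_def by blast

lemma bck2: "x \<in> A \<Longrightarrow> y \<in> A \<Longrightarrow> m (m x (m x y)) y = z"
  using bck_algebra unfolding bck_algebra_def by blast

lemma diff_self: "x \<in> A \<Longrightarrow> m x x = z"
  using bck_algebra unfolding bck_algebra_def by blast

lemma zero_diff: "x \<in> A \<Longrightarrow> m z x = z"
  using bck_algebra unfolding bck_algebra_def by blast

lemma diff_antisym: "x \<in> A \<Longrightarrow> y \<in> A \<Longrightarrow> m x y = z \<Longrightarrow> m y x = z \<Longrightarrow> x = y"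
  using bck_algebra unfolding bck_algebra_def by blast

lemma diff_zero: "x \<in> A \<Longrightarrow> m x z = x"
  by (metis diff_closed bck2 diff_self diff_antisym)

lemma diff_trans: "x \<in> A \<Longrightarrow> y \<in> A \<Longrightarrow> w \<in> A \<Longrightarrow> m x y = z \<Longrightarrow> m y w = z \<Longrightarrow> m x w = z"
  by (metis diff_closed bck1 zero_diff diff_antisym)

lemma diff_antimono: "x \<in> A \<Longrightarrow> y \<in> A \<Longrightarrow> w \<in> A \<Longrightarrow> m x y = z \<Longrightarrow> m (m w y) (m w x) = z"
  by (metis bck1 diff_closed diff_zero)

lemma diff_mono: "x \<in> A \<Longrightarrow> y \<in> A \<Longrightarrow> w \<in> A \<Longrightarrow> m x y = z \<Longrightarrow> m (m x w) (m y w) = z"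
  by (metis bck1 diff_closed diff_zero)

lemma diff_exchange:
  assumes "x \<in> A" "y \<in> A" "w \<in> A"
  shows "m (m x y) w = m (m x w) y"
proof -
  have le: "m (m (m x y) w) (m (m x w) y) = z" if "x \<in> A" "y \<in> A" "w \<in> A" for x y w
  proof -
    have "m (m (m x y) w) (m (m x y) (m x (m x w))) = z"
      using diff_antimono[of "m x (m x w)" w "m x y"] bck2 that diff_closed by auto
    moreover have "m (m (m x y) (m x (m x w))) (m (m x w) y) = z"
      using bck1[of x y "m x w"] that diff_closed by auto
    ultimately show ?thesis
      using diff_trans[of "m (m x y) w" "m (m x y) (m x (m x w))" "m (m x w) y"] that
      by (simp add: diff_closed)
  qed
  show ?thesis
    using diff_antisym[OF _ _ le[of x y w] le[of x w y]] assms by (simp add: diff_closed)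
qed

lemma diff_le_self: "x \<in> A \<Longrightarrow> y \<in> A \<Longrightarrow> m (m x y) x = z"
  by (simp add: diff_exchange diff_self zero_diff)

end

locale bounded_comm_bck = bck +
  fixes u :: 'a
  assumes meet_comm: "\<And>x y. x \<in> A \<Longrightarrow> y \<in> A \<Longrightarrow> bck_meet m x y = bck_meet m y x"
    and bounded: "bounded_bck A m z u"
begin

lemma top_in: "u \<in> A"
  using bounded unfolding bounded_bck_def by blast

lemma diff_top: "x \<in> A \<Longrightarrow> m x u = z"
  using bounded unfolding bounded_bck_def by blast

lemma diff_diff_comm: "x \<in> A \<Longrightarrow> y \<in> A \<Longrightarrow> m y (m y x) = m x (m x y)"
  using meet_comm[of x y] unfolding bck_meet_def by simp

lemma neg_closed: "x \<in> A \<Longrightarrow> m u x \<in> A"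
  by (simp add: diff_closed top_in)

lemma neg_neg: "x \<in> A \<Longrightarrow> m u (m u x) = x"
  using diff_diff_comm[OF _ top_in] by (simp add: diff_top diff_zero)

lemma neg_diff_neg: "x \<in> A \<Longrightarrow> y \<in> A \<Longrightarrow> m (m u y) (m u x) = m x y"
  by (metis diff_exchange neg_neg top_in diff_closed)

lemma diff_diff_eq_diff_neg:
  assumes "x \<in> A" "y \<in> A" "w \<in> A"
  shows "m (m x y) w = m x (m u (m (m u y) w))"
proof -
  have "m x (m u (m (m u y) w)) = m (m (m u y) w) (m u x)"
    using neg_diff_neg[of x "m u (m (m u y) w)"] neg_neg assms by (simp add: diff_closed neg_closed)
  also have "\<dots> = m (m (m u y) (m u x)) w"
    using diff_exchange assms by (simp add: neg_closed)
  also have "\<dots> = m (m x y) w"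
    using neg_diff_neg assms by simp
  finally show ?thesis by simp
qed

definition prod :: "'a \<Rightarrow> 'a \<Rightarrow> 'a" where
  "prod x y = m x (m u y)"

lemma prod_closed: "x \<in> A \<Longrightarrow> y \<in> A \<Longrightarrow> prod x y \<in> A"
  by (simp add: prod_def diff_closed neg_closed)

lemma prod_comm: "x \<in> A \<Longrightarrow> y \<in> A \<Longrightarrow> prod x y = prod y x"
  unfolding prod_def by (metis neg_diff_neg neg_neg neg_closed)

lemma prod_assoc: "x \<in> A \<Longrightarrow> y \<in> A \<Longrightarrow> w \<in> A \<Longrightarrow> prod (prod x y) w = prod x (prod y w)"
  unfolding prod_def by (metis diff_diff_eq_diff_neg neg_neg diff_closed neg_closed)

lemma diff_eq_prod_neg: "x \<in> A \<Longrightarrow> y \<in> A \<Longrightarrow> m x y = prod x (m u y)"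
  by (simp add: prod_def neg_neg)

definition idempotents :: "'a set" where
  "idempotents = {x \<in> A. prod x x = x}"

lemma idempotents_iff: "x \<in> idempotents \<longleftrightarrow> x \<in> A \<and> prod x x = x"
  by (simp add: idempotents_def)

lemma idempotent_neg:
  assumes "x \<in> A" "prod x x = x"
  shows "prod (m u x) (m u x) = m u x"
proof -
  have x: "m x (m u x) = x"
    using assms(2) unfolding prod_def .
  have "m (m u x) (m (m u x) x) = z"
    using diff_diff_comm[of "m u x" x] x assms(1) by (simp add: diff_self neg_closed)
  moreover have "m (m (m u x) x) (m u x) = z"
    using diff_le_self[OF neg_closed assms(1)] assms(1) .
  ultimately have "m u x = m (m u x) x"
    using diff_antisym[OF neg_closed diff_closed[OF neg_closed]] assms(1) by blast
  then show ?thesis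
    unfolding prod_def using neg_neg assms(1) by simp
qed

lemma idempotent_prod_eq_meet:
  assumes b: "b \<in> A" and x: "x \<in> A" and idem: "prod b b = b"
  shows "prod b x = m b (m b x)"
proof -
  define q where "q = m x (m x b)"
  have q: "q \<in> A" and nb: "m u b \<in> A"
    using q_def b x diff_closed neg_closed by auto
  have nb_diff_b: "m (m u b) b = m u b"
    using idempotent_neg[OF b idem] neg_neg[OF b] unfolding prod_def by simp
  have "m (m x (m u b)) b = m x (m u (m b b))"
    using diff_diff_eq_diff_neg[OF x nb b] neg_neg[OF b] by simp
  also have "\<dots> = z"
    using diff_self[OF b] diff_zero[OF top_in] diff_top[OF x] by simp
  finally have "m (m x (m u b)) b = z" .
  then have "m (m x b) (m u b) = z"
    using diff_exchange[OF x b nb] by simp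
  then have le1: "m (m x (m u b)) q = z"
    unfolding q_def by (rule diff_antimono[OF diff_closed[OF x b] nb x])
  have "m q b = z"
    unfolding q_def using diff_diff_comm[OF b x] diff_le_self[OF b diff_closed[OF b x]] by simp
  then have "m (m u b) (m (m u b) q) = z"
    using diff_antimono[OF q b nb] nb_diff_b by simp
  then have "m u b = m (m u b) q"
    by (rule diff_antisym[OF nb diff_closed[OF nb q] _ diff_le_self[OF nb q]])
  then have "m q (m q (m u b)) = z"
    using diff_diff_comm[OF q nb] diff_self[OF nb] by simp
  then have "q = m q (m u b)"
    by (rule diff_antisym[OF q diff_closed[OF q nb] _ diff_le_self[OF q nb]])
  moreover have "m q x = z"
    unfolding q_def using diff_le_self[OF x diff_closed[OF x b]] .
  ultimately have le2: "m q (m x (m u b)) = z"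
    using diff_mono[OF q x nb] by simp
  have "m x (m u b) = q"
    using diff_antisym[OF diff_closed[OF x nb] q le1 le2] .
  moreover have "m b (m u x) = m x (m u b)"
    using neg_diff_neg[OF b neg_closed[OF x]] neg_neg[OF x] by simp
  ultimately show ?thesis
    unfolding prod_def q_def using diff_diff_comm[OF b x] by simp
qed

text \<open>Every \<open>x\<close> splits along a Boolean \<open>b\<close> as \<open>x = (x \<odot> b) \<oplus> (x \<odot> \<not>b)\<close>.\<close>
lemma neg_split_idempotent:
  assumes b: "b \<in> A" and x: "x \<in> A" and idem: "prod b b = b"
  shows "m u x = m (m u (prod x b)) (prod x (m u b))"
proof -
  define q where "q = m x b"
  have q: "q \<in> A"
    using b x diff_closed q_def by auto
  have "prod x b = m x q"
    unfolding q_def prod_comm[OF x b] idempotent_prod_eq_meet[OF assms] by (rule diff_diff_comm[OF b x, symmetric])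
  moreover have "prod x (m u b) = q"
    unfolding prod_def q_def using neg_neg[OF b] by simp
  moreover have "m (m u (m x q)) q = m u x"
  proof -
    have "m (m u (m x q)) q = m (m u q) (m x q)"
      using neg_diff_neg[OF neg_closed[OF q] diff_closed[OF x q]] neg_neg[OF q] by simp
    also have "\<dots> = m (m u q) (m (m u q) (m u x))"
      using neg_diff_neg[OF x q] by simp
    also have "\<dots> = m (m u x) (m (m u x) (m u q))"
      by (rule diff_diff_comm[OF neg_closed[OF x] neg_closed[OF q]])
    also have "\<dots> = m u x"
      using neg_diff_neg[OF q x] diff_le_self[OF x b] diff_zero[OF neg_closed[OF x]]
      unfolding q_def by simp
    finally show ?thesis .
  qed
  ultimately show ?thesis by simp
qed

lemma prod_square_idempotent:
  assumes s: "s \<in> A" and c: "c \<in> A" and idem: "prod c c = c"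
  shows "prod (prod s c) (prod s c) = prod (prod s s) c"
proof -
  have "prod (prod s c) (prod s c) = prod s (prod c (prod s c))"
    using prod_assoc[OF s c prod_closed[OF s c]] .
  also have "\<dots> = prod s (prod (prod c c) s)"
    using prod_comm[OF s c] prod_assoc[OF c c s] by simp
  also have "\<dots> = prod (prod s s) c"
    using idem prod_comm[OF s c] prod_assoc[OF s s c] by simp
  finally show ?thesis .
qed

lemma idempotent_prod:
  "b \<in> A \<Longrightarrow> c \<in> A \<Longrightarrow> prod b b = b \<Longrightarrow> prod c c = c \<Longrightarrow> prod (prod b c) (prod b c) = prod b c"
  using prod_square_idempotent by simp

lemma idempotent_diff:
  "b \<in> A \<Longrightarrow> c \<in> A \<Longrightarrow> prod b b = b \<Longrightarrow> prod c c = c \<Longrightarrow> prod (m b c) (m b c) = m b c"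
  using idempotent_prod[of b "m u c"] idempotent_neg[of c] diff_eq_prod_neg[of b c] neg_closed[of c]
  by simp

lemma idempotent_diff_nilpotent_le:
  assumes b: "b \<in> A" and c: "c \<in> A" and d: "d \<in> A"
    and idem: "prod b b = b" "prod c c = c" and nil: "prod d d = z"
    and eq: "m b d = m c d"
  shows "m b c = z"
proof -
  define e where "e = m b c"
  have e: "e \<in> A"
    using b c diff_closed e_def by auto
  have "m e d = m (m c d) c"
    unfolding e_def diff_exchange[OF b c d] eq ..
  also have "\<dots> = z"
    using diff_exchange[OF c c d] diff_self[OF c] zero_diff[OF d] by simp
  finally have ed: "m e d = z" .
  moreover have "m d (m u d) = z"
    using nil unfolding prod_def .
  ultimately have "m e (m u d) = z"
    by (rule diff_trans[OF e d neg_closed[OF d]])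
  moreover have "m (m u d) (m u e) = z"
    using diff_antimono[OF e d top_in ed] .
  ultimately have "m e (m u e) = z"
    by (rule diff_trans[OF e neg_closed[OF d] neg_closed[OF e]])
  then show ?thesis
    using idempotent_diff[OF b c idem] unfolding prod_def e_def by simp
qed

lemma diff_nilpotent_inj_on_idempotents:
  assumes "b \<in> A" "c \<in> A" "d \<in> A" "prod b b = b" "prod c c = c" "prod d d = z"
    and "m b d = m c d"
  shows "b = c"
  using diff_antisym[OF assms(1,2)] idempotent_diff_nilpotent_le[OF assms]
    idempotent_diff_nilpotent_le[OF assms(2,1,3,5,4,6) assms(7)[symmetric]] by blast

lemma idempotent_if_diffs_idempotent:
  assumes b: "b \<in> A" and d: "d \<in> A" and idem: "prod b b = b"
    and bd: "prod (m b d) (m b d) = m b d"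
    and nbd: "prod (m (m u b) d) (m (m u b) d) = m (m u b) d"
  shows "prod d d = d"
proof -
  define s where "s = m u d"
  have s: "s \<in> A" and ss: "prod s s \<in> A" and nb: "m u b \<in> A"
    using s_def d b neg_closed prod_closed by auto
  have sb: "prod s b = m b d"
    unfolding prod_def s_def using neg_diff_neg b d by simp
  have snb: "prod s (m u b) = m (m u b) d"
    unfolding prod_def s_def using neg_diff_neg[OF nb d] neg_neg b by simp
  have "prod (prod s s) b = prod s b"
    using prod_square_idempotent[OF s b idem] sb bd by simp
  moreover have "prod (prod s s) (m u b) = prod s (m u b)"
    using prod_square_idempotent[OF s nb idempotent_neg[OF b idem]] snb nbd by simp
  ultimately have "m u (prod s s) = m u s"
    using neg_split_idempotent[OF b ss idem] neg_split_idempotent[OF b s idem] by simp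
  then have "prod s s = s"
    using neg_neg[OF ss] neg_neg[OF s] by metis
  then show ?thesis
    using idempotent_neg[OF s] neg_neg[OF d] unfolding s_def by simp
qed

lemma idempotent_iff_meet_neg_zero:
  assumes x: "x \<in> A"
  shows "prod x x = x \<longleftrightarrow> m x (m x (m u x)) = z"
proof
  assume "prod x x = x"
  then show "m x (m x (m u x)) = z"
    unfolding prod_def using diff_self[OF x] by simp
next
  assume "m x (m x (m u x)) = z"
  then have "x = m x (m u x)"
    by (rule diff_antisym[OF x diff_closed[OF x neg_closed[OF x]] _ diff_le_self[OF x neg_closed[OF x]]])
  then show "prod x x = x"
    unfolding prod_def by simp
qed

lemma neg_eq_top_iff:
  assumes "y \<in> A"
  shows "m u y = u \<longleftrightarrow> y = z"
proof
  assume "m u y = u"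
  then show "y = z"
    using neg_neg[OF assms] diff_self[OF top_in] by simp
qed (simp add: diff_zero top_in)

lemma excluded_middle_iff_idempotent:
  assumes x: "x \<in> A"
  shows "bck_join m u x (bck_neg m u x) = u \<longleftrightarrow> prod x x = x"
proof -
  have "bck_join m u x (bck_neg m u x) = m u (m x (m x (m u x)))"
    unfolding bck_join_def bck_neg_def bck_meet_def using neg_neg[OF x] by simp
  then show ?thesis
    using neg_eq_top_iff[OF diff_closed[OF x diff_closed[OF x neg_closed[OF x]]]]
      idempotent_iff_meet_neg_zero[OF x] by simp
qed

lemma nilpotent_if_not_idempotent:
  assumes a: "a \<in> A" and nonidem: "prod a a \<noteq> a"
  obtains d where "d \<in> A" "prod d d = z" "d \<noteq> z"
proof
  define d where "d = m a (m a (m u a))"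
  have na: "m u a \<in> A"
    using a neg_closed by blast
  show d: "d \<in> A"
    using d_def a na diff_closed by auto
  have "m d a = z"
    unfolding d_def by (rule diff_le_self[OF a diff_closed[OF a na]])
  then have "m (m u a) (m u d) = z"
    by (rule diff_antimono[OF d a top_in])
  moreover have "m d (m u a) = z"
    unfolding d_def diff_diff_comm[OF na a]
    by (rule diff_le_self[OF na diff_closed[OF na a]])
  ultimately show "prod d d = z"
    unfolding prod_def by (rule diff_trans[OF d na neg_closed[OF d], rotated])
  show "d \<noteq> z"
    using nonidem idempotent_iff_meet_neg_zero[OF a] unfolding d_def by simp
qed

lemma idempotents_embed_into_non_idempotents:
  assumes d: "d \<in> A" "prod d d = z" "d \<noteq> z"
  obtains G :: "'a \<Rightarrow> 'a \<times> bool"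
  where "inj_on G idempotents" "G ` idempotents \<subseteq> (A - idempotents) \<times> UNIV"
proof
  define G where
    "G b = (if m b d \<notin> idempotents then (m b d, True) else (m (m u b) d, False))" for b
  show "G ` idempotents \<subseteq> (A - idempotents) \<times> UNIV"
  proof
    fix p assume "p \<in> G ` idempotents"
    then obtain b where b: "b \<in> A" "prod b b = b" and p: "p = G b"
      by (auto simp: idempotents_iff)
    have "m b d \<notin> idempotents \<or> m (m u b) d \<notin> idempotents"
      using idempotent_if_diffs_idempotent[OF b(1) d(1) b(2)] d by (auto simp: idempotents_iff)
    then show "p \<in> (A - idempotents) \<times> UNIV"
      unfolding p G_def using b d diff_closed neg_closed by auto
  qed
  show "inj_on G idempotents"
  proof (rule inj_onI)
    fix b c assume "b \<in> idempotents" "c \<in> idempotents" and eq: "G b = G c"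
    then have b: "b \<in> A" "prod b b = b" and c: "c \<in> A" "prod c c = c"
      by (auto simp: idempotents_iff)
    show "b = c"
    proof (cases "m b d \<in> idempotents")
      case False
      then have "m b d = m c d"
        using eq unfolding G_def by (auto split: if_splits)
      then show ?thesis
        using diff_nilpotent_inj_on_idempotents b c d by blast
    next
      case True
      then have "m (m u b) d = m (m u c) d"
        using eq unfolding G_def by (auto split: if_splits)
      then have "m u b = m u c"
        using diff_nilpotent_inj_on_idempotents idempotent_neg b c d neg_closed by blast
      then show ?thesis
        using neg_neg b c by metis
    qed
  qed
qed

lemma card_idempotents_le:
  assumes fin: "finite A" and a: "a \<in> A" "prod a a \<noteq> a"
  shows "3 * card idempotents \<le> 2 * card A"
proof -
  obtain d where "d \<in> A" "prod d d = z" "d \<noteq> z"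
    using nilpotent_if_not_idempotent[OF a] by blast
  then obtain G :: "'a \<Rightarrow> 'a \<times> bool"
    where "inj_on G idempotents" "G ` idempotents \<subseteq> (A - idempotents) \<times> UNIV"
    by (rule idempotents_embed_into_non_idempotents)
  then have "card idempotents \<le> card ((A - idempotents) \<times> (UNIV :: bool set))"
    using card_inj_on_le fin by (metis finite_Diff finite_SigmaI finite_UNIV)
  also have "\<dots> = 2 * (card A - card idempotents)"
    using fin by (simp add: card_cartesian_product card_Diff_subset idempotents_def)
  finally show ?thesis
    using card_mono[OF fin, of idempotents] by (simp add: idempotents_def)
qed

end

lemma chain_excluded_middle_set:
  "n \<ge> 2 \<Longrightarrow> {x \<in> Cn_carrier n. bck_join Cn_op (n - 1) x (bck_neg Cn_op (n - 1) x) = n - 1} = {0, n - 1}"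
  unfolding Cn_carrier_def bck_join_def bck_neg_def bck_meet_def Cn_op_def
  by (auto simp: max_def split: if_splits)

lemma emd_chain: "n \<ge> 2 \<Longrightarrow> emd (Cn_carrier n) Cn_op (n - 1) = 2 / real n"
  unfolding emd_def using chain_excluded_middle_set[of n] by (simp add: Cn_carrier_def)

theorem theorem4p2:
  shows "(\<forall>(A :: 'a set) m z u.
            finite A \<longrightarrow> commutative_bck A m z \<longrightarrow> bounded_bck A m z u \<longrightarrow>
            (\<forall>x\<in>A. bck_join m u x (bck_neg m u x) = u) \<or> emd A m u \<le> 2 / 3)
       \<and> emd (Cn_carrier 3) Cn_op (3 - 1) = 2 / 3
       \<and> (\<forall>n::nat. n \<ge> 2 \<longrightarrow> emd (Cn_carrier n) Cn_op (n - 1) = 2 / real n)"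
proof (intro conjI allI impI)
  fix A :: "'a set" and m z u
  assume fin: "finite A" and comm: "commutative_bck A m z" and bd: "bounded_bck A m z u"
  interpret bounded_comm_bck A m z u
    using comm bd by unfold_locales (auto simp: commutative_bck_def)
  have sat: "{x \<in> A. bck_join m u x (bck_neg m u x) = u} = idempotents"
    using excluded_middle_iff_idempotent by (auto simp: idempotents_def)
  show "(\<forall>x\<in>A. bck_join m u x (bck_neg m u x) = u) \<or> emd A m u \<le> 2 / 3"
  proof (cases "\<forall>x\<in>A. prod x x = x")
    case True
    then show ?thesis
      using excluded_middle_iff_idempotent by blast
  next
    case False
    then obtain a where a: "a \<in> A" "prod a a \<noteq> a" by blast
    have "3 * real (card idempotents) \<le> 2 * real (card A)"
      using card_idempotents_le[OF fin a] by linarith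
    moreover have "card A > 0"
      using a fin card_gt_0_iff by blast
    ultimately show ?thesis
      unfolding emd_def sat by (simp add: field_simps)
  qed
next
  show "emd (Cn_carrier 3) Cn_op (3 - 1) = 2 / 3"
    using emd_chain[of 3] by simp
qed (rule emd_chain)

end
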